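(* Let $G$ be a connected graph with domination number $\gamma(G)\ge 2$ and let $H$ be any graph. If $X$ is a $\mu_t(G\circ H)$-set, then for every vertex $u\in V(G)$, $$|(\{u\}\times V(H))\cap X|\ge n(H)-1.$$
   Context: All graphs are finite, simple and undirected; $n(G)$ denotes the order of $G$ and $\gamma(G)$ its domination number. The lexicographic product $G\circ H$ has vertex set $V(G)\times V(H)$, with $(x,y)$ adjacent to $(x',y')$ iff $xx'\in E(G)$, or $x=x'$ and $yy'\in E(H)$. Let $F$ be a connected graph and $X\subseteq V(F)$. Two vertices $x,y\in V(F)$ are $X$-visible if there exists a shortest $x,y$-path in $F$ none of whose internal vertices belongs to $X$. $X$ is a total mutual-visibility set of $F$ if every two vertices of $F$ are $X$-visible (the empty set is allowed). $\mu_t(F)$ is the maximum cardinality of a total mutual-visibility set of $F$, and a $\mu_t(F)$-set is a total mutual-visibility set of that cardinality. *)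

theory Defs
  imports Main
begin

definition graph :: "'a set \<Rightarrow> ('a \<Rightarrow> 'a \<Rightarrow> bool) \<Rightarrow> bool" where
  "graph V E \<longleftrightarrow> finite V \<and> (\<forall>x y. E x y \<longrightarrow> x \<in> V \<and> y \<in> V)
     \<and> (\<forall>x y. E x y \<longrightarrow> E y x) \<and> (\<forall>x. \<not> E x x)"

definition walk :: "'a set \<Rightarrow> ('a \<Rightarrow> 'a \<Rightarrow> bool) \<Rightarrow> 'a list \<Rightarrow> bool" where
  "walk V E xs \<longleftrightarrow> xs \<noteq> [] \<and> set xs \<subseteq> V \<and>
     (\<forall>i. Suc i < length xs \<longrightarrow> E (xs ! i) (xs ! Suc i))"

definition walk_betw :: "'a set \<Rightarrow> ('a \<Rightarrow> 'a \<Rightarrow> bool) \<Rightarrow> 'a \<Rightarrow> 'a \<Rightarrow> 'a list \<Rightarrow> bool" where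
  "walk_betw V E x y xs \<longleftrightarrow> walk V E xs \<and> hd xs = x \<and> last xs = y"

definition connected_graph :: "'a set \<Rightarrow> ('a \<Rightarrow> 'a \<Rightarrow> bool) \<Rightarrow> bool" where
  "connected_graph V E \<longleftrightarrow> graph V E \<and> V \<noteq> {} \<and>
     (\<forall>x\<in>V. \<forall>y\<in>V. \<exists>xs. walk_betw V E x y xs)"

definition gdist :: "'a set \<Rightarrow> ('a \<Rightarrow> 'a \<Rightarrow> bool) \<Rightarrow> 'a \<Rightarrow> 'a \<Rightarrow> nat" where
  "gdist V E x y = (LEAST n. \<exists>xs. walk_betw V E x y xs \<and> length xs = Suc n)"

definition shortest_path :: "'a set \<Rightarrow> ('a \<Rightarrow> 'a \<Rightarrow> bool) \<Rightarrow> 'a \<Rightarrow> 'a \<Rightarrow> 'a list \<Rightarrow> bool" where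
  "shortest_path V E x y xs \<longleftrightarrow> walk_betw V E x y xs \<and> length xs = Suc (gdist V E x y)"

definition internal :: "'a list \<Rightarrow> 'a set" where
  "internal xs = set (butlast (tl xs))"

definition X_visible :: "'a set \<Rightarrow> ('a \<Rightarrow> 'a \<Rightarrow> bool) \<Rightarrow> 'a set \<Rightarrow> 'a \<Rightarrow> 'a \<Rightarrow> bool" where
  "X_visible V E X x y \<longleftrightarrow> (\<exists>xs. shortest_path V E x y xs \<and> internal xs \<inter> X = {})"

definition total_mv_set :: "'a set \<Rightarrow> ('a \<Rightarrow> 'a \<Rightarrow> bool) \<Rightarrow> 'a set \<Rightarrow> bool" where
  "total_mv_set V E X \<longleftrightarrow> X \<subseteq> V \<and> (\<forall>x\<in>V. \<forall>y\<in>V. X_visible V E X x y)"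

definition mu_t :: "'a set \<Rightarrow> ('a \<Rightarrow> 'a \<Rightarrow> bool) \<Rightarrow> nat" where
  "mu_t V E = Max (card ` {X. total_mv_set V E X})"

definition mu_t_set :: "'a set \<Rightarrow> ('a \<Rightarrow> 'a \<Rightarrow> bool) \<Rightarrow> 'a set \<Rightarrow> bool" where
  "mu_t_set V E X \<longleftrightarrow> total_mv_set V E X \<and> card X = mu_t V E"

definition dominating_set :: "'a set \<Rightarrow> ('a \<Rightarrow> 'a \<Rightarrow> bool) \<Rightarrow> 'a set \<Rightarrow> bool" where
  "dominating_set V E D \<longleftrightarrow> D \<subseteq> V \<and> (\<forall>v\<in>V. v \<in> D \<or> (\<exists>u\<in>D. E u v))"

definition domination_number :: "'a set \<Rightarrow> ('a \<Rightarrow> 'a \<Rightarrow> bool) \<Rightarrow> nat" where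
  "domination_number V E = Min (card ` {D. dominating_set V E D})"

definition lex_vertices :: "'a set \<Rightarrow> 'b set \<Rightarrow> ('a \<times> 'b) set" where
  "lex_vertices VG VH = VG \<times> VH"

definition lex_edges :: "'a set \<Rightarrow> ('a \<Rightarrow> 'a \<Rightarrow> bool) \<Rightarrow> 'b set \<Rightarrow> ('b \<Rightarrow> 'b \<Rightarrow> bool)
    \<Rightarrow> ('a \<times> 'b) \<Rightarrow> ('a \<times> 'b) \<Rightarrow> bool" where
  "lex_edges VG EG VH EH p q \<longleftrightarrow> p \<in> VG \<times> VH \<and> q \<in> VG \<times> VH \<and>
     (EG (fst p) (fst q) \<or> (fst p = fst q \<and> EH (snd p) (snd q)))"

end

theory Submission
  imports Defs
begin

text \<open>Suppose two vertices (u,h1), (u,h2) of the layer of u are missing from X. Since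
  \<open>\<gamma>(G) \<ge> 2\<close> there is a vertex w not adjacent to u, and a shortest path from (u,h1) to (w,h1)
  must leave the layer of u through a vertex r0 not in X. Then X plus (u,h1) is still a
  total mutual-visibility set: an interior vertex (u,h1) of a shortest path has non-adjacent
  path neighbours a, c, which either both lie in the layer of u, so that (u,h1) can be
  replaced by r0, or both lie in layers adjacent to u, so that it can be replaced by (u,h2).
  This contradicts the maximality of X.\<close>

lemma walk_iff_successively:
  "walk V E xs \<longleftrightarrow> xs \<noteq> [] \<and> set xs \<subseteq> V \<and> successively E xs"
  unfolding walk_def successively_conv_nth by blast

lemma shortest_path_length_le:
  assumes "shortest_path V E x y xs" "walk_betw V E x y ys"
  shows "length xs \<le> length ys"
proof -
  have ne: "ys \<noteq> []" using assms(2) by (simp add: walk_betw_def walk_def)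
  have "gdist V E x y \<le> length ys - 1"
    unfolding gdist_def by (rule Least_le) (use assms(2) ne in auto)
  then show ?thesis using assms(1) ne unfolding shortest_path_def by (cases ys) auto
qed

lemma shortest_path_distinct:
  assumes "shortest_path V E x y xs"
  shows "distinct xs"
proof (rule ccontr)
  assume "\<not> distinct xs"
  then obtain A B C v where xs: "xs = A @ [v] @ B @ [v] @ C"
    using not_distinct_decomp by blast
  have "walk_betw V E x y (A @ [v] @ C)"
    using assms unfolding xs shortest_path_def walk_betw_def walk_iff_successively
    by (auto simp: successively_append_iff successively_Cons hd_append)
  from shortest_path_length_le[OF assms this] show False unfolding xs by simp
qed

lemma shortest_path_no_chord:
  assumes "shortest_path V E x y (A @ [a, b, c] @ C)"
  shows "\<not> E a c"
proof
  assume "E a c"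
  then have "walk_betw V E x y (A @ [a, c] @ C)"
    using assms unfolding shortest_path_def walk_betw_def walk_iff_successively
    by (auto simp: successively_append_iff successively_Cons hd_append)
  from shortest_path_length_le[OF assms this] show False by simp
qed

lemma shortest_path_replace:
  assumes "shortest_path V E x y (A @ [a, b, c] @ C)" "r \<in> V" "E a r" "E r c"
  shows "shortest_path V E x y (A @ [a, r, c] @ C)"
  using assms unfolding shortest_path_def walk_betw_def walk_iff_successively
  by (auto simp: successively_append_iff successively_Cons hd_append)

lemma internalE:
  assumes "v \<in> internal xs"
  obtains A a c C where "xs = A @ [a, v, c] @ C"
proof -
  from assms obtain P Q where PQ: "butlast (tl xs) = P @ v # Q"
    unfolding internal_def by (meson split_list)
  then have "tl xs \<noteq> []" by auto
  then have "xs = hd xs # butlast (tl xs) @ [last (tl xs)]" by (cases xs) auto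
  then have xs: "xs = (hd xs # P) @ v # (Q @ [last (tl xs)])" using PQ by simp
  obtain A a where "hd xs # P = A @ [a]" by (metis rev_exhaust list.distinct(1))
  moreover obtain c C where "Q @ [last (tl xs)] = c # C" by (cases "Q @ [last (tl xs)]") auto
  ultimately show ?thesis using that xs by simp
qed

lemma internal_eq:
  "internal (A @ [a, v, c] @ C) = insert v (set (tl (A @ [a])) \<union> set (butlast (c # C)))"
proof -
  have "tl (A @ [a, v, c] @ C) = tl (A @ [a]) @ v # c # C" by (cases A) auto
  then show ?thesis unfolding internal_def by (simp add: butlast_append)
qed

lemma set_tl_subset_internal:
  "set (tl xs) \<subseteq> insert (last xs) (internal xs)"
proof (cases "tl xs = []")
  case False
  then have "set (tl xs) = insert (last xs) (set (butlast (tl xs)))"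
    by (metis append_butlast_last_id last_tl list.set(2) set_append Un_insert_right
        sup_bot.right_neutral empty_set)
  then show ?thesis unfolding internal_def by simp
qed simp

lemma total_mv_set_insert:
  assumes tmv: "total_mv_set V E X" and "v \<in> V"
    and bypass: "\<And>a c. E a v \<Longrightarrow> E v c \<Longrightarrow> \<not> E a c \<Longrightarrow> \<exists>r\<in>V. r \<notin> insert v X \<and> E a r \<and> E r c"
  shows "total_mv_set V E (insert v X)"
  unfolding total_mv_set_def
proof (intro conjI ballI)
  show "insert v X \<subseteq> V" using tmv \<open>v \<in> V\<close> by (simp add: total_mv_set_def)
next
  fix p q assume "p \<in> V" "q \<in> V"
  then obtain xs where xs: "shortest_path V E p q xs" "internal xs \<inter> X = {}"
    using tmv unfolding total_mv_set_def X_visible_def by blast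
  show "X_visible V E (insert v X) p q"
  proof (cases "v \<in> internal xs")
    case False
    then show ?thesis using xs unfolding X_visible_def by blast
  next
    case True
    then obtain A a c C where dec: "xs = A @ [a, v, c] @ C" by (rule internalE)
    have "successively E xs" using xs(1)
      by (simp add: shortest_path_def walk_betw_def walk_iff_successively)
    then have "E a v" "E v c" unfolding dec by (auto simp: successively_append_iff)
    moreover have "\<not> E a c" using xs(1) unfolding dec by (rule shortest_path_no_chord)
    ultimately obtain r where r: "r \<in> V" "r \<notin> insert v X" "E a r" "E r c" using bypass by blast
    define S where "S = set (tl (A @ [a])) \<union> set (butlast (c # C))"
    have "set (tl (A @ [a])) \<subseteq> set (A @ [a])" by (cases A) auto
    then have "S \<subseteq> set (A @ [a]) \<union> set (c # C)"
      unfolding S_def by (auto dest: in_set_butlastD)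
    moreover have "distinct xs" using xs(1) by (rule shortest_path_distinct)
    ultimately have "v \<notin> S" unfolding dec by auto
    moreover have "S \<inter> X = {}" using xs(2) unfolding dec internal_eq S_def by blast
    ultimately have "internal (A @ [a, r, c] @ C) \<inter> insert v X = {}"
      using r(2) unfolding internal_eq S_def by blast
    moreover have "shortest_path V E p q (A @ [a, r, c] @ C)"
      using shortest_path_replace[OF xs(1)[unfolded dec] r(1,3,4)] .
    ultimately show ?thesis unfolding X_visible_def by blast
  qed
qed

lemma card_le_mu_t:
  assumes "finite V" "total_mv_set V E Y"
  shows "card Y \<le> mu_t V E"
proof -
  have "{X. total_mv_set V E X} \<subseteq> Pow V" by (auto simp: total_mv_set_def)
  then have "finite (card ` {X. total_mv_set V E X})"
    using assms(1) by (meson finite_Pow_iff finite_imageI finite_subset)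
  then show ?thesis unfolding mu_t_def using assms(2) by simp
qed

lemma mu_t_set_insert_not_total:
  assumes "finite V" "mu_t_set V E X" "v \<in> V" "v \<notin> X"
  shows "\<not> total_mv_set V E (insert v X)"
proof
  assume "total_mv_set V E (insert v X)"
  then have "card (insert v X) \<le> card X"
    using card_le_mu_t[OF assms(1)] assms(2) by (simp add: mu_t_set_def)
  moreover have "finite X"
    using assms(1,2) finite_subset by (auto simp: mu_t_set_def total_mv_set_def)
  ultimately show False using assms(4) by simp
qed

lemma domination_number_le_card:
  assumes "finite V" "dominating_set V E D"
  shows "domination_number V E \<le> card D"
proof -
  have "{D. dominating_set V E D} \<subseteq> Pow V" by (auto simp: dominating_set_def)
  then have "finite (card ` {D. dominating_set V E D})"
    using assms(1) by (meson finite_Pow_iff finite_imageI finite_subset)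
  then show ?thesis unfolding domination_number_def using assms(2) by simp
qed

lemma non_neighbour_if_domination_number_ge_2:
  assumes "graph V E" "domination_number V E \<ge> 2" "u \<in> V"
  obtains w where "w \<in> V" "w \<noteq> u" "\<not> E u w"
proof -
  have "\<not> dominating_set V E {u}"
    using domination_number_le_card[of V E "{u}"] assms by (auto simp: graph_def)
  then show ?thesis using that assms(3) unfolding dominating_set_def by blast
qed

lemma successively_crossing:
  assumes "successively E xs" "xs \<noteq> []" "P (hd xs)" "\<not> P (last xs)"
  shows "\<exists>a b. E a b \<and> P a \<and> \<not> P b \<and> b \<in> set (tl xs)"
  using assms
proof (induction xs)
  case (Cons x ys)
  then have "ys \<noteq> []" by auto
  then obtain y zs where ys: "ys = y # zs" by (cases ys) auto
  show ?case
  proof (cases "P y")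
    case True
    then show ?thesis using Cons ys by (auto simp: successively_Cons dest: list.set_sel(2))
  next
    case False
    then show ?thesis using Cons.prems ys by auto
  qed
qed simp

lemma lex_common_neighbour_cases:
  assumes "lex_edges VG EG VH EH a (u, h)" "lex_edges VG EG VH EH (u, h) c"
    and "\<not> lex_edges VG EG VH EH a c"
  shows "fst a = u \<and> fst c = u \<or> EG (fst a) u \<and> EG u (fst c)"
  using assms unfolding lex_edges_def by auto

lemma lex_total_mv_set_insert:
  assumes "graph VG EG" and tmv: "total_mv_set (VG \<times> VH) (lex_edges VG EG VH EH) X"
    and "u \<in> VG" "h1 \<in> VH" "h2 \<in> VH" "h1 \<noteq> h2" "(u, h2) \<notin> X"
    and r0: "r0 \<in> VG \<times> VH" "r0 \<notin> X" "EG u (fst r0)"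
  shows "total_mv_set (VG \<times> VH) (lex_edges VG EG VH EH) (insert (u, h1) X)"
proof (rule total_mv_set_insert[OF tmv])
  let ?V = "VG \<times> VH" and ?E = "lex_edges VG EG VH EH"
  fix a c assume ac: "?E a (u, h1)" "?E (u, h1) c" "\<not> ?E a c"
  then have "a \<in> ?V" "c \<in> ?V" unfolding lex_edges_def by auto
  from lex_common_neighbour_cases[OF ac]
  show "\<exists>r\<in>?V. r \<notin> insert (u, h1) X \<and> ?E a r \<and> ?E r c"
  proof
    assume "fst a = u \<and> fst c = u"
    moreover have "EG (fst r0) u" "r0 \<noteq> (u, h1)" using r0(3) assms(1) by (auto simp: graph_def)
    ultimately show ?thesis using r0 \<open>a \<in> ?V\<close> \<open>c \<in> ?V\<close>
      by (intro bexI[of _ r0]) (auto simp: lex_edges_def)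
  next
    assume "EG (fst a) u \<and> EG u (fst c)"
    then show ?thesis using assms(3-7) \<open>a \<in> ?V\<close> \<open>c \<in> ?V\<close>
      by (intro bexI[of _ "(u, h2)"]) (auto simp: lex_edges_def)
  qed
qed (use assms(3,4) in simp)

lemma lex_layer_exit:
  assumes "total_mv_set (VG \<times> VH) (lex_edges VG EG VH EH) X"
    and "u \<in> VG" "w \<in> VG" "w \<noteq> u" "\<not> EG u w" "h \<in> VH"
  obtains r where "r \<in> VG \<times> VH" "r \<notin> X" "EG u (fst r)"
proof -
  let ?E = "lex_edges VG EG VH EH"
  have "(u, h) \<in> VG \<times> VH" "(w, h) \<in> VG \<times> VH" using assms(2,3,6) by auto
  then obtain xs where xs: "shortest_path (VG \<times> VH) ?E (u, h) (w, h) xs" "internal xs \<inter> X = {}"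
    using assms(1) unfolding total_mv_set_def X_visible_def by blast
  then have "successively ?E xs" "xs \<noteq> []" "hd xs = (u, h)" "last xs = (w, h)"
    unfolding shortest_path_def walk_betw_def walk_iff_successively by auto
  with \<open>w \<noteq> u\<close> obtain a b where ab: "?E a b" "fst a = u" "fst b \<noteq> u" "b \<in> set (tl xs)"
    using successively_crossing[of ?E xs "\<lambda>p. fst p = u"] by auto
  then have b: "b \<in> VG \<times> VH" "EG u (fst b)" unfolding lex_edges_def by auto
  with assms(5) \<open>last xs = (w, h)\<close> have "b \<noteq> last xs" by auto
  then have "b \<in> internal xs" using ab(4) set_tl_subset_internal[of xs] by blast
  with xs(2) have "b \<notin> X" by blast
  then show ?thesis using b by (intro that)
qed

lemma two_missing_in_layer:
  assumes "finite VH" "card (({u} \<times> VH) \<inter> X) < card VH - 1"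
  obtains h1 h2 where "h1 \<in> VH" "h2 \<in> VH" "h1 \<noteq> h2" "(u, h1) \<notin> X" "(u, h2) \<notin> X"
proof -
  define K where "K = {h \<in> VH. (u, h) \<in> X}"
  define M where "M = {h \<in> VH. (u, h) \<notin> X}"
  have "({u} \<times> VH) \<inter> X = Pair u ` K" unfolding K_def by auto
  then have "card (({u} \<times> VH) \<inter> X) = card K" by (simp add: card_image inj_on_def)
  moreover have "VH = K \<union> M" "K \<inter> M = {}" unfolding K_def M_def by auto
  then have "card VH = card K + card M"
    using assms(1) by (metis card_Un_disjoint finite_Un)
  ultimately have "2 \<le> card M" using assms(2) by linarith
  then obtain h1 h2 where "h1 \<in> M" "h2 \<in> M" "h1 \<noteq> h2"
    by (metis card_le_Suc_iff numeral_2_eq_2 insert_iff)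
  then show ?thesis using that unfolding M_def by blast
qed

theorem lemma4p1:
  fixes VG :: "'a set" and EG :: "'a \<Rightarrow> 'a \<Rightarrow> bool"
    and VH :: "'b set" and EH :: "'b \<Rightarrow> 'b \<Rightarrow> bool"
    and X :: "('a \<times> 'b) set"
  assumes "connected_graph VG EG"
    and "domination_number VG EG \<ge> 2"
    and "graph VH EH"
    and "mu_t_set (lex_vertices VG VH) (lex_edges VG EG VH EH) X"
    and "u \<in> VG"
  shows "card (({u} \<times> VH) \<inter> X) \<ge> card VH - 1"
proof (rule ccontr)
  let ?V = "VG \<times> VH" and ?E = "lex_edges VG EG VH EH"
  have gG: "graph VG EG" using assms(1) by (simp add: connected_graph_def)
  have finVH: "finite VH" and finV: "finite ?V"
    using gG assms(3) by (simp_all add: graph_def)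
  have mu: "mu_t_set ?V ?E X" using assms(4) by (simp add: lex_vertices_def)
  then have tmv: "total_mv_set ?V ?E X" by (simp add: mu_t_set_def)
  assume "\<not> ?thesis"
  then have "card (({u} \<times> VH) \<inter> X) < card VH - 1" by simp
  then obtain h1 h2 where h: "h1 \<in> VH" "h2 \<in> VH" "h1 \<noteq> h2" "(u, h1) \<notin> X" "(u, h2) \<notin> X"
    by (rule two_missing_in_layer[OF finVH])
  obtain w where w: "w \<in> VG" "w \<noteq> u" "\<not> EG u w"
    by (rule non_neighbour_if_domination_number_ge_2[OF gG assms(2,5)])
  obtain r0 where r0: "r0 \<in> ?V" "r0 \<notin> X" "EG u (fst r0)"
    by (rule lex_layer_exit[OF tmv assms(5) w h(1)])
  have "total_mv_set ?V ?E (insert (u, h1) X)"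
    by (rule lex_total_mv_set_insert[OF gG tmv assms(5) h(1-3,5) r0])
  moreover have "\<not> total_mv_set ?V ?E (insert (u, h1) X)"
    by (rule mu_t_set_insert_not_total[OF finV mu]) (use assms(5) h in auto)
  ultimately show False by contradiction
qed

end
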